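(* Let $f: G\twoheadrightarrow H$ be a surjection of finite groups and let $r\in\mathbb{Z}$ be coprime to $|G|$. Then $\mathbb{Z}H\otimes_{\mathbb{Z}G}(I_G,r)\cong (I_H,r)$ as $\mathbb{Z}H$-modules.
   Context: For a finite group $G$, $I_G$ is the augmentation ideal of $\mathbb{Z}G$ and $(I_G,r)$ is the ideal of $\mathbb{Z}G$ generated by $I_G$ and $r$. $\mathbb{Z}H$ is a right $\mathbb{Z}G$-module via $f$. *)

theory Defs
  imports "HOL-Algebra.Algebra"
begin

text \<open>Elements of ZG are integer-valued functions on carrier G vanishing outside carrier G
  (G is finite, so these are exactly the finite formal Z-combinations of group elements).\<close>

definition group_ring :: "('g, 'm) monoid_scheme \<Rightarrow> ('g \<Rightarrow> int) ring" where
  "group_ring G =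
     \<lparr> carrier = {a. \<forall>x. x \<notin> carrier G \<longrightarrow> a x = 0},
       monoid.mult = (\<lambda>a b z. if z \<in> carrier G
                          then (\<Sum>x\<in>carrier G. a x * b (inv\<^bsub>G\<^esub> x \<otimes>\<^bsub>G\<^esub> z)) else 0),
       monoid.one = (\<lambda>z. if z = \<one>\<^bsub>G\<^esub> then 1 else 0),
       ring.zero = (\<lambda>z. 0),
       ring.add = (\<lambda>a b z. a z + b z) \<rparr>"

definition gr_int :: "('g, 'm) monoid_scheme \<Rightarrow> int \<Rightarrow> ('g \<Rightarrow> int)" where
  "gr_int G r = (\<lambda>z. if z = \<one>\<^bsub>G\<^esub> then r else 0)"

definition augmentation_ideal :: "('g, 'm) monoid_scheme \<Rightarrow> ('g \<Rightarrow> int) set" where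
  "augmentation_ideal G = {a \<in> carrier (group_ring G). (\<Sum>x\<in>carrier G. a x) = 0}"

definition aug_ideal_r :: "('g, 'm) monoid_scheme \<Rightarrow> int \<Rightarrow> ('g \<Rightarrow> int) set" where
  "aug_ideal_r G r = genideal (group_ring G) (augmentation_ideal G \<union> {gr_int G r})"

definition group_ring_map ::
  "('g, 'm) monoid_scheme \<Rightarrow> ('h, 'n) monoid_scheme \<Rightarrow> ('g \<Rightarrow> 'h) \<Rightarrow> ('g \<Rightarrow> int) \<Rightarrow> ('h \<Rightarrow> int)" where
  "group_ring_map G H f a =
     (\<lambda>h. if h \<in> carrier H then (\<Sum>x\<in>{x \<in> carrier G. f x = h}. a x) else 0)"

text \<open>Here M is a left ideal of ZG (a left ZG-module by multiplication) and ZH is a right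
  ZG-module via f.  The tensor product is constructed as the free abelian group on
  ZH \<times> M modulo the subgroup generated by the bilinearity and balancing relations.
  Elements of the free abelian group are finitely supported functions (ZH \<times> M) -> Z.\<close>

type_synonym ('h, 'g) free_elem = "(('h \<Rightarrow> int) \<times> ('g \<Rightarrow> int)) \<Rightarrow> int"

definition free_delta :: "('h \<Rightarrow> int) \<times> ('g \<Rightarrow> int) \<Rightarrow> ('h, 'g) free_elem" where
  "free_delta p = (\<lambda>q. if q = p then 1 else 0)"

definition free_add :: "('h, 'g) free_elem \<Rightarrow> ('h, 'g) free_elem \<Rightarrow> ('h, 'g) free_elem" where
  "free_add u v = (\<lambda>p. u p + v p)"

definition free_neg :: "('h, 'g) free_elem \<Rightarrow> ('h, 'g) free_elem" where
  "free_neg u = (\<lambda>p. - u p)"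

definition free_carrier ::
  "('h \<Rightarrow> int) set \<Rightarrow> ('g \<Rightarrow> int) set \<Rightarrow> ('h, 'g) free_elem set" where
  "free_carrier A M = {u. finite {p. u p \<noteq> 0} \<and> {p. u p \<noteq> 0} \<subseteq> A \<times> M}"

definition tensor_generators ::
  "('g, 'm) monoid_scheme \<Rightarrow> ('h, 'n) monoid_scheme \<Rightarrow> ('g \<Rightarrow> 'h) \<Rightarrow> ('g \<Rightarrow> int) set
     \<Rightarrow> ('h, 'g) free_elem set" where
  "tensor_generators G H f M =
     {free_add (free_delta (a \<oplus>\<^bsub>group_ring H\<^esub> a', m))
        (free_neg (free_add (free_delta (a, m)) (free_delta (a', m))))
      | a a' m. a \<in> carrier (group_ring H) \<and> a' \<in> carrier (group_ring H) \<and> m \<in> M}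
   \<union> {free_add (free_delta (a, m \<oplus>\<^bsub>group_ring G\<^esub> m'))
        (free_neg (free_add (free_delta (a, m)) (free_delta (a, m'))))
      | a m m'. a \<in> carrier (group_ring H) \<and> m \<in> M \<and> m' \<in> M}
   \<union> {free_add (free_delta (a \<otimes>\<^bsub>group_ring H\<^esub> group_ring_map G H f x, m))
        (free_neg (free_delta (a, x \<otimes>\<^bsub>group_ring G\<^esub> m)))
      | a x m. a \<in> carrier (group_ring H) \<and> x \<in> carrier (group_ring G) \<and> m \<in> M}"

inductive_set tensor_relations ::
  "('g, 'm) monoid_scheme \<Rightarrow> ('h, 'n) monoid_scheme \<Rightarrow> ('g \<Rightarrow> 'h) \<Rightarrow> ('g \<Rightarrow> int) set
     \<Rightarrow> ('h, 'g) free_elem set"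
  for G H f M where
    rel_zero: "(\<lambda>p. 0) \<in> tensor_relations G H f M"
  | rel_gen: "u \<in> tensor_generators G H f M \<Longrightarrow> u \<in> tensor_relations G H f M"
  | rel_add: "u \<in> tensor_relations G H f M \<Longrightarrow> v \<in> tensor_relations G H f M
               \<Longrightarrow> free_add u v \<in> tensor_relations G H f M"
  | rel_neg: "u \<in> tensor_relations G H f M \<Longrightarrow> free_neg u \<in> tensor_relations G H f M"

definition tensor_class ::
  "('g, 'm) monoid_scheme \<Rightarrow> ('h, 'n) monoid_scheme \<Rightarrow> ('g \<Rightarrow> 'h) \<Rightarrow> ('g \<Rightarrow> int) set
     \<Rightarrow> ('h, 'g) free_elem \<Rightarrow> ('h, 'g) free_elem set" where
  "tensor_class G H f M u = free_add u ` tensor_relations G H f M"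

definition tensor_carrier ::
  "('g, 'm) monoid_scheme \<Rightarrow> ('h, 'n) monoid_scheme \<Rightarrow> ('g \<Rightarrow> 'h) \<Rightarrow> ('g \<Rightarrow> int) set
     \<Rightarrow> ('h, 'g) free_elem set set" where
  "tensor_carrier G H f M =
     tensor_class G H f M ` free_carrier (carrier (group_ring H)) M"

definition tensor_add ::
  "('g, 'm) monoid_scheme \<Rightarrow> ('h, 'n) monoid_scheme \<Rightarrow> ('g \<Rightarrow> 'h) \<Rightarrow> ('g \<Rightarrow> int) set
     \<Rightarrow> ('h, 'g) free_elem set \<Rightarrow> ('h, 'g) free_elem set \<Rightarrow> ('h, 'g) free_elem set" where
  "tensor_add G H f M S1 S2 =
     tensor_class G H f M (free_add (SOME u. u \<in> S1) (SOME v. v \<in> S2))"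

text \<open>Left ZH-action on the free abelian group: b \<cdot> (a, m) = (b a, m), extended linearly.\<close>
definition free_smult ::
  "('h, 'n) monoid_scheme \<Rightarrow> ('h \<Rightarrow> int) \<Rightarrow> ('h, 'g) free_elem \<Rightarrow> ('h, 'g) free_elem" where
  "free_smult H b u =
     (\<lambda>q. \<Sum>p\<in>{p. u p \<noteq> 0 \<and> (b \<otimes>\<^bsub>group_ring H\<^esub> fst p, snd p) = q}. u p)"

definition tensor_smult ::
  "('g, 'm) monoid_scheme \<Rightarrow> ('h, 'n) monoid_scheme \<Rightarrow> ('g \<Rightarrow> 'h) \<Rightarrow> ('g \<Rightarrow> int) set
     \<Rightarrow> ('h \<Rightarrow> int) \<Rightarrow> ('h, 'g) free_elem set \<Rightarrow> ('h, 'g) free_elem set" where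
  "tensor_smult G H f M b S1 = tensor_class G H f M (free_smult H b (SOME u. u \<in> S1))"

end

theory Submission
  imports Defs
begin

(* The map a (x) m |-> a f(m) kills the defining relations of ZH (x)_{ZG} (I_G, r), so it induces
   a ZH-linear map to ZH.  Its image is (I_H, r) = {a. r divides the augmentation of a}, because the
   lift of such an a along f lies in (I_G, r).  For injectivity, every tensor equals 1 (x) m for a
   single m, so it suffices that 1 (x) m = 0 whenever f(m) = 0.  Such an m is an integer
   combination of differences g - g' with f g = f g', and these reduce to k - 1 with k in the
   kernel of f.  Since k acts trivially on ZH, 1 (x) (k x - x) = 0 for every x in (I_G, r); taking
   x = r shows that 1 (x) (k - 1) is killed by r, and the telescoping k^n - 1 = n (k - 1) modulo
   such tensors together with k^|G| = 1 shows it is killed by |G|.  As r and |G| are coprime,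
   1 (x) (k - 1) = 0. *)

section \<open>Integral group rings\<close>

lemma group_ring_simps:
  "carrier (group_ring G) = {a. \<forall>x. x \<notin> carrier G \<longrightarrow> a x = 0}"
  "a \<otimes>\<^bsub>group_ring G\<^esub> b = (\<lambda>z. if z \<in> carrier G
                          then (\<Sum>x\<in>carrier G. a x * b (inv\<^bsub>G\<^esub> x \<otimes>\<^bsub>G\<^esub> z)) else 0)"
  "\<one>\<^bsub>group_ring G\<^esub> = (\<lambda>z. if z = \<one>\<^bsub>G\<^esub> then 1 else 0)"
  "\<zero>\<^bsub>group_ring G\<^esub> = (\<lambda>z. 0)"
  "a \<oplus>\<^bsub>group_ring G\<^esub> b = (\<lambda>z. a z + b z)"
  by (simp_all add: group_ring_def)

lemma group_ring_mult_carrier: "a \<otimes>\<^bsub>group_ring G\<^esub> b \<in> carrier (group_ring G)"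
  by (simp add: group_ring_simps)

lemma group_ring_mult_sum_right:
  "a \<otimes>\<^bsub>group_ring G\<^esub> (\<lambda>z. \<Sum>p\<in>S. c p * b p z)
     = (\<lambda>z. \<Sum>p\<in>S. c p * (a \<otimes>\<^bsub>group_ring G\<^esub> b p) z)"
proof -
  have "(\<Sum>x\<in>carrier G. a x * (\<Sum>p\<in>S. c p * b p (inv\<^bsub>G\<^esub> x \<otimes>\<^bsub>G\<^esub> z)))
      = (\<Sum>p\<in>S. c p * (\<Sum>x\<in>carrier G. a x * b p (inv\<^bsub>G\<^esub> x \<otimes>\<^bsub>G\<^esub> z)))" for z
    by (simp only: sum_distrib_left mult.left_commute) (rule sum.swap)
  then show ?thesis
    by (simp add: group_ring_simps fun_eq_iff)
qed

definition gr_basis :: "'g \<Rightarrow> 'g \<Rightarrow> int" where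
  "gr_basis g = (\<lambda>z. if z = g then 1 else 0)"

abbreviation basis_diff :: "'g \<Rightarrow> 'g \<Rightarrow> 'g \<Rightarrow> int" where
  "basis_diff x y \<equiv> (\<lambda>z. gr_basis x z - gr_basis y z)"

definition augmentation :: "('g, 'm) monoid_scheme \<Rightarrow> ('g \<Rightarrow> int) \<Rightarrow> int" where
  "augmentation G a = (\<Sum>x\<in>carrier G. a x)"

lemma augmentation_ideal_eq:
  "augmentation_ideal G = {a \<in> carrier (group_ring G). augmentation G a = 0}"
  by (simp add: augmentation_ideal_def augmentation_def)

lemma (in group) mult_inv_cancel_left [simp]:
  "x \<in> carrier G \<Longrightarrow> y \<in> carrier G \<Longrightarrow> x \<otimes> (inv x \<otimes> y) = y"
  by (simp add: m_assoc[symmetric])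

lemma (in group) inv_mult_cancel_left [simp]:
  "x \<in> carrier G \<Longrightarrow> y \<in> carrier G \<Longrightarrow> inv x \<otimes> (x \<otimes> y) = y"
  by (simp add: m_assoc[symmetric])

locale finite_group = group +
  assumes finite_carrier: "finite (carrier G)"
begin

lemma sum_left_translate:
  assumes "x \<in> carrier G"
  shows "(\<Sum>z\<in>carrier G. \<phi> (inv x \<otimes> z)) = (\<Sum>y\<in>carrier G. \<phi> y)"
  by (rule sum.reindex_bij_witness[where j="\<lambda>z. inv x \<otimes> z" and i="\<lambda>y. x \<otimes> y"])
     (use assms in simp_all)

lemma sum_delta_at:
  "z \<in> carrier G \<Longrightarrow> (\<Sum>x\<in>carrier G. if x = z then c else 0) = c"
  using finite_carrier by (simp add: sum.delta')

lemma group_ring_mult_assoc: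
  "(a \<otimes>\<^bsub>group_ring G\<^esub> b) \<otimes>\<^bsub>group_ring G\<^esub> c = a \<otimes>\<^bsub>group_ring G\<^esub> (b \<otimes>\<^bsub>group_ring G\<^esub> c)"
proof (rule ext)
  fix z
  show "((a \<otimes>\<^bsub>group_ring G\<^esub> b) \<otimes>\<^bsub>group_ring G\<^esub> c) z = (a \<otimes>\<^bsub>group_ring G\<^esub> (b \<otimes>\<^bsub>group_ring G\<^esub> c)) z"
  proof (cases "z \<in> carrier G")
    case z: True
    have inner: "(\<Sum>y\<in>carrier G. b (inv x \<otimes> y) * c (inv y \<otimes> z))
       = (\<Sum>w\<in>carrier G. b w * c (inv w \<otimes> (inv x \<otimes> z)))" if x: "x \<in> carrier G" for x
      using sum_left_translate[OF x, of "\<lambda>w. b w * c (inv w \<otimes> (inv x \<otimes> z))"] x z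
      by (simp add: inv_mult_group m_assoc)
    have "((a \<otimes>\<^bsub>group_ring G\<^esub> b) \<otimes>\<^bsub>group_ring G\<^esub> c) z
       = (\<Sum>y\<in>carrier G. (\<Sum>x\<in>carrier G. a x * b (inv x \<otimes> y)) * c (inv y \<otimes> z))"
      using z unfolding group_ring_simps(2) by (auto intro!: sum.cong)
    also have "\<dots> = (\<Sum>x\<in>carrier G. a x * (\<Sum>y\<in>carrier G. b (inv x \<otimes> y) * c (inv y \<otimes> z)))"
      by (simp only: sum_distrib_left sum_distrib_right mult.assoc) (rule sum.swap)
    also have "\<dots> = (a \<otimes>\<^bsub>group_ring G\<^esub> (b \<otimes>\<^bsub>group_ring G\<^esub> c)) z"
      using z unfolding group_ring_simps(2) by (auto intro!: sum.cong simp: inner)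
    finally show ?thesis .
  qed (simp add: group_ring_simps)
qed

lemma group_ring_mult_basis_left:
  assumes "x \<in> carrier G"
  shows "gr_basis x \<otimes>\<^bsub>group_ring G\<^esub> b = (\<lambda>z. if z \<in> carrier G then b (inv x \<otimes> z) else 0)"
proof -
  have "(\<Sum>y\<in>carrier G. gr_basis x y * b (inv y \<otimes> z)) = b (inv x \<otimes> z)" for z
    using sum_delta_at[OF assms, of "b (inv x \<otimes> z)"]
    by (simp add: gr_basis_def if_distrib[of "\<lambda>c. c * _"] cong: if_cong)
  then show ?thesis by (simp only: group_ring_simps)
qed

lemma group_ring_mult_basis_right:
  assumes "a \<in> carrier (group_ring G)" "y \<in> carrier G"
  shows "a \<otimes>\<^bsub>group_ring G\<^esub> gr_basis y = (\<lambda>z. if z \<in> carrier G then a (z \<otimes> inv y) else 0)"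
proof -
  have "(\<Sum>x\<in>carrier G. a x * gr_basis y (inv x \<otimes> z)) = a (z \<otimes> inv y)" if z: "z \<in> carrier G" for z
  proof -
    have "(inv x \<otimes> z = y) = (x = z \<otimes> inv y)" if "x \<in> carrier G" for x
      using that z assms(2) by (metis inv_closed inv_solve_left' inv_solve_right m_closed)
    then have "(\<Sum>x\<in>carrier G. a x * gr_basis y (inv x \<otimes> z))
             = (\<Sum>x\<in>carrier G. if x = z \<otimes> inv y then a (z \<otimes> inv y) else 0)"
      by (intro sum.cong) (auto simp: gr_basis_def)
    then show ?thesis using z assms(2) by (simp add: sum_delta_at)
  qed
  then show ?thesis by (auto simp: group_ring_simps)
qed

lemma gr_basis_carrier: "g \<in> carrier G \<Longrightarrow> gr_basis g \<in> carrier (group_ring G)"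
  by (auto simp: gr_basis_def group_ring_simps)

lemma group_ring_one_basis: "\<one>\<^bsub>group_ring G\<^esub> = gr_basis \<one>"
  by (simp add: group_ring_simps gr_basis_def)

lemma group_ring_is_ring: "ring (group_ring G)"
proof (rule ringI)
  show "abelian_group (group_ring G)"
  proof (rule abelian_groupI)
    fix x assume x: "x \<in> carrier (group_ring G)"
    show "\<exists>y\<in>carrier (group_ring G). y \<oplus>\<^bsub>group_ring G\<^esub> x = \<zero>\<^bsub>group_ring G\<^esub>"
      by (rule bexI[where x="\<lambda>z. - x z"]) (use x in \<open>auto simp: group_ring_simps\<close>)
  qed (auto simp: group_ring_simps)
  show "monoid (group_ring G)"
  proof (rule monoidI)
    fix a assume a: "a \<in> carrier (group_ring G)"
    show "\<one>\<^bsub>group_ring G\<^esub> \<otimes>\<^bsub>group_ring G\<^esub> a = a"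
      using a by (subst group_ring_one_basis, subst group_ring_mult_basis_left) (auto simp: group_ring_simps)
    show "a \<otimes>\<^bsub>group_ring G\<^esub> \<one>\<^bsub>group_ring G\<^esub> = a"
      using a by (subst group_ring_one_basis, subst group_ring_mult_basis_right) (auto simp: group_ring_simps)
  next
    fix a b c
    show "a \<otimes>\<^bsub>group_ring G\<^esub> b \<otimes>\<^bsub>group_ring G\<^esub> c
        = a \<otimes>\<^bsub>group_ring G\<^esub> (b \<otimes>\<^bsub>group_ring G\<^esub> c)"
      by (rule group_ring_mult_assoc)
  qed (auto simp: group_ring_simps)
next
  fix x y z
  show "(x \<oplus>\<^bsub>group_ring G\<^esub> y) \<otimes>\<^bsub>group_ring G\<^esub> z
      = x \<otimes>\<^bsub>group_ring G\<^esub> z \<oplus>\<^bsub>group_ring G\<^esub> y \<otimes>\<^bsub>group_ring G\<^esub> z"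
    by (rule ext) (simp add: group_ring_simps distrib_right sum.distrib)
  show "z \<otimes>\<^bsub>group_ring G\<^esub> (x \<oplus>\<^bsub>group_ring G\<^esub> y)
      = z \<otimes>\<^bsub>group_ring G\<^esub> x \<oplus>\<^bsub>group_ring G\<^esub> z \<otimes>\<^bsub>group_ring G\<^esub> y"
    by (rule ext) (simp add: group_ring_simps distrib_left sum.distrib)
qed

end

sublocale finite_group \<subseteq> ZG: ring "group_ring G"
  by (rule group_ring_is_ring)

context finite_group
begin

lemma gr_basis_mult:
  assumes "x \<in> carrier G" "y \<in> carrier G"
  shows "gr_basis x \<otimes>\<^bsub>group_ring G\<^esub> gr_basis y = gr_basis (x \<otimes> y)"
proof -
  have "(inv x \<otimes> z = y) = (z = x \<otimes> y)" if "z \<in> carrier G" for z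
    using assms that by (simp add: inv_solve_left')
  then show ?thesis
    unfolding group_ring_mult_basis_left[OF assms(1)] using assms by (auto simp: gr_basis_def)
qed

lemma gr_int_eq: "gr_int G c = (\<lambda>z. c * gr_basis \<one> z)"
  by (simp add: gr_int_def gr_basis_def fun_eq_iff)

lemma gr_int_carrier: "gr_int G c \<in> carrier (group_ring G)"
  by (auto simp: gr_int_def group_ring_simps)

lemma group_ring_mult_scale_right:
  "a \<otimes>\<^bsub>group_ring G\<^esub> (\<lambda>z. c * b z) = (\<lambda>z. c * (a \<otimes>\<^bsub>group_ring G\<^esub> b) z)"
  by (simp add: group_ring_simps sum_distrib_left mult.left_commute fun_eq_iff)

lemma group_ring_mult_gr_int_right:
  "a \<in> carrier (group_ring G) \<Longrightarrow> a \<otimes>\<^bsub>group_ring G\<^esub> gr_int G c = (\<lambda>z. c * a z)"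
  by (simp add: gr_int_eq group_ring_mult_scale_right group_ring_one_basis[symmetric])

lemma group_ring_mult_diff_right:
  "a \<otimes>\<^bsub>group_ring G\<^esub> (\<lambda>z. b z - b' z)
     = (\<lambda>z. (a \<otimes>\<^bsub>group_ring G\<^esub> b) z - (a \<otimes>\<^bsub>group_ring G\<^esub> b') z)"
  by (simp add: group_ring_simps sum_subtractf right_diff_distrib fun_eq_iff)

lemma gr_basis_mult_basis_diff:
  assumes "k \<in> carrier G" "y \<in> carrier G"
  shows "gr_basis k \<otimes>\<^bsub>group_ring G\<^esub> basis_diff y \<one> = basis_diff (k \<otimes> y) k"
  using assms by (simp add: group_ring_mult_diff_right gr_basis_mult)

lemma augmentation_basis: "g \<in> carrier G \<Longrightarrow> augmentation G (gr_basis g) = 1"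
  by (simp add: augmentation_def gr_basis_def sum_delta_at)

lemma augmentation_gr_int: "augmentation G (gr_int G c) = c"
  by (simp add: augmentation_def gr_int_def sum_delta_at)

lemma augmentation_mult:
  "augmentation G (a \<otimes>\<^bsub>group_ring G\<^esub> b) = augmentation G a * augmentation G b"
proof -
  have "augmentation G (a \<otimes>\<^bsub>group_ring G\<^esub> b)
      = (\<Sum>z\<in>carrier G. \<Sum>x\<in>carrier G. a x * b (inv x \<otimes> z))"
    unfolding augmentation_def group_ring_simps(2) by (rule sum.cong) auto
  also have "\<dots> = (\<Sum>x\<in>carrier G. a x * (\<Sum>z\<in>carrier G. b (inv x \<otimes> z)))"
    by (simp only: sum_distrib_left) (rule sum.swap)
  also have "\<dots> = (\<Sum>x\<in>carrier G. a x * augmentation G b)"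
    by (simp add: sum_left_translate augmentation_def)
  also have "\<dots> = augmentation G a * augmentation G b"
    by (simp add: augmentation_def sum_distrib_right)
  finally show ?thesis .
qed

lemma augmentation_dvd_ideal:
  "ideal {a \<in> carrier (group_ring G). r dvd augmentation G a} (group_ring G)"
proof (rule idealI[OF group_ring_is_ring])
  let ?I = "{a \<in> carrier (group_ring G). r dvd augmentation G a}"
  show "subgroup ?I (add_monoid (group_ring G))"
  proof (rule group.subgroupI[OF ZG.a_group])
    show "?I \<noteq> {}"
      using ZG.zero_closed by (auto simp: augmentation_def group_ring_simps)
    fix a b assume a: "a \<in> ?I" and b: "b \<in> ?I"
    have "inv\<^bsub>add_monoid (group_ring G)\<^esub> a = \<ominus>\<^bsub>group_ring G\<^esub> a"
      by (simp add: a_inv_def)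
    also have "\<dots> = (\<lambda>z. - a z)"
      using a by (intro ZG.minus_equality) (auto simp: group_ring_simps)
    finally show "inv\<^bsub>add_monoid (group_ring G)\<^esub> a \<in> ?I"
      using a by (auto simp: augmentation_def sum_negf group_ring_simps)
    show "a \<otimes>\<^bsub>add_monoid (group_ring G)\<^esub> b \<in> ?I"
      using a b by (auto simp: augmentation_def sum.distrib group_ring_simps)
  qed auto
qed (auto simp: augmentation_mult)

lemma aug_ideal_r_eq:
  "aug_ideal_r G r = {a \<in> carrier (group_ring G). r dvd augmentation G a}"
proof
  show "aug_ideal_r G r \<subseteq> {a \<in> carrier (group_ring G). r dvd augmentation G a}"
    unfolding aug_ideal_r_def
    by (rule ZG.genideal_minimal[OF augmentation_dvd_ideal])
       (auto simp: augmentation_ideal_eq gr_int_carrier augmentation_gr_int)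
next
  have generators: "augmentation_ideal G \<union> {gr_int G r} \<subseteq> carrier (group_ring G)"
    by (auto simp: augmentation_ideal_def gr_int_carrier)
  interpret I: ideal "aug_ideal_r G r" "group_ring G"
    unfolding aug_ideal_r_def by (rule ZG.genideal_ideal[OF generators])
  have in_ideal: "augmentation_ideal G \<union> {gr_int G r} \<subseteq> aug_ideal_r G r"
    unfolding aug_ideal_r_def by (rule ZG.genideal_self[OF generators])
  show "{a \<in> carrier (group_ring G). r dvd augmentation G a} \<subseteq> aug_ideal_r G r"
  proof
    fix a assume "a \<in> {a \<in> carrier (group_ring G). r dvd augmentation G a}"
    then obtain k where a: "a \<in> carrier (group_ring G)" and k: "augmentation G a = r * k"
      by (auto elim: dvdE)
    have "(\<lambda>z. a z - k * gr_int G r z) \<in> augmentation_ideal G"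
      using a k augmentation_gr_int[of r]
      by (auto simp: augmentation_ideal_eq augmentation_def group_ring_simps gr_int_def sum_subtractf
                     sum_distrib_left[symmetric])
    moreover have "gr_int G r \<otimes>\<^bsub>group_ring G\<^esub> gr_int G k \<in> aug_ideal_r G r"
      using in_ideal by (intro I.I_r_closed gr_int_carrier) auto
    moreover have "gr_int G r \<otimes>\<^bsub>group_ring G\<^esub> gr_int G k = (\<lambda>z. k * gr_int G r z)"
      by (rule group_ring_mult_gr_int_right[OF gr_int_carrier])
    ultimately have "(\<lambda>z. a z - k * gr_int G r z) \<oplus>\<^bsub>group_ring G\<^esub> (\<lambda>z. k * gr_int G r z)
        \<in> aug_ideal_r G r"
      using in_ideal by (intro I.a_closed) auto
    then show "a \<in> aug_ideal_r G r" by (simp add: group_ring_simps)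
  qed
qed

lemma mem_aug_ideal_r:
  "a \<in> aug_ideal_r G r \<longleftrightarrow> a \<in> carrier (group_ring G) \<and> r dvd augmentation G a"
  by (simp add: aug_ideal_r_eq)

lemma aug_ideal_r_is_ideal: "ideal (aug_ideal_r G r) (group_ring G)"
  unfolding aug_ideal_r_eq by (rule augmentation_dvd_ideal)

context
  fixes I assumes I: "ideal I (group_ring G)"
begin

interpretation I: ideal I "group_ring G" by (rule I)

lemma ideal_group_ring_zero: "(\<lambda>z. 0) \<in> I"
  using I.zero_closed by (simp add: group_ring_simps)

lemma ideal_group_ring_add: "m \<in> I \<Longrightarrow> m' \<in> I \<Longrightarrow> (\<lambda>z. m z + m' z) \<in> I"
  using I.a_closed by (simp add: group_ring_simps)

lemma ideal_group_ring_scale: "m \<in> I \<Longrightarrow> (\<lambda>z. c * m z) \<in> I"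
  using I.I_r_closed[OF _ gr_int_carrier] by (simp add: group_ring_mult_gr_int_right I.Icarr)

lemma ideal_group_ring_diff: "m \<in> I \<Longrightarrow> m' \<in> I \<Longrightarrow> (\<lambda>z. m z - m' z) \<in> I"
  using ideal_group_ring_add[OF _ ideal_group_ring_scale[of m' "-1"]] by simp

lemma ideal_group_ring_sum:
  "finite S \<Longrightarrow> (\<And>p. p \<in> S \<Longrightarrow> x p \<in> I) \<Longrightarrow> (\<lambda>z. \<Sum>p\<in>S. c p * x p z) \<in> I"
  by (induction S rule: finite_induct)
     (simp_all add: ideal_group_ring_zero ideal_group_ring_add ideal_group_ring_scale)

end

lemma basis_diff_mem_aug_ideal_r:
  "x \<in> carrier G \<Longrightarrow> y \<in> carrier G \<Longrightarrow> basis_diff x y \<in> aug_ideal_r G r"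
  using augmentation_basis[of x] augmentation_basis[of y]
  by (auto simp: mem_aug_ideal_r group_ring_simps gr_basis_def augmentation_def sum_subtractf)

lemma gr_int_mem_aug_ideal_r: "gr_int G r \<in> aug_ideal_r G r"
  by (simp add: mem_aug_ideal_r gr_int_carrier augmentation_gr_int)

end

section \<open>Relations of the tensor product\<close>

context
  fixes G :: "('g, 'm) monoid_scheme" and H :: "('h, 'n) monoid_scheme"
    and f :: "'g \<Rightarrow> 'h" and M :: "('g \<Rightarrow> int) set"
begin

lemma tensor_relations_add:
  "u \<in> tensor_relations G H f M \<Longrightarrow> v \<in> tensor_relations G H f M
    \<Longrightarrow> (\<lambda>p. u p + v p) \<in> tensor_relations G H f M"
  using tensor_relations.rel_add unfolding free_add_def .

lemma tensor_relations_neg: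
  "u \<in> tensor_relations G H f M \<Longrightarrow> (\<lambda>p. - u p) \<in> tensor_relations G H f M"
  using tensor_relations.rel_neg unfolding free_neg_def .

lemma tensor_relations_diff:
  "u \<in> tensor_relations G H f M \<Longrightarrow> v \<in> tensor_relations G H f M
    \<Longrightarrow> (\<lambda>p. u p - v p) \<in> tensor_relations G H f M"
  using tensor_relations_add[OF _ tensor_relations_neg] by simp

lemma tensor_relations_scale:
  assumes "u \<in> tensor_relations G H f M"
  shows "(\<lambda>p. c * u p) \<in> tensor_relations G H f M"
proof (induction c rule: int_induct[where k=0])
  case base
  then show ?case using tensor_relations.rel_zero by simp
next
  case (step1 i)
  then show ?case using tensor_relations_add[OF _ assms] by (simp add: distrib_right)
next
  case (step2 i)
  then show ?case using tensor_relations_diff[OF _ assms] by (simp add: left_diff_distrib)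
qed

lemma tensor_relations_sum:
  assumes "finite S" "\<And>i. i \<in> S \<Longrightarrow> u i \<in> tensor_relations G H f M"
  shows "(\<lambda>p. \<Sum>i\<in>S. c i * u i p) \<in> tensor_relations G H f M"
  using assms
proof (induction S rule: finite_induct)
  case empty
  then show ?case using tensor_relations.rel_zero by simp
next
  case (insert i S)
  then show ?case by (simp add: tensor_relations_add tensor_relations_scale)
qed

lemma supp_free_delta: "{p. free_delta q p \<noteq> 0} = {q}"
  by (auto simp: free_delta_def)

lemma supp_free_neg: "{p. free_neg u p \<noteq> 0} = {p. u p \<noteq> 0}"
  by (auto simp: free_neg_def)

lemma free_carrier_delta: "fst q \<in> A \<Longrightarrow> snd q \<in> N \<Longrightarrow> free_delta q \<in> free_carrier A N"
  by (cases q) (simp add: free_carrier_def free_delta_def)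

lemma free_carrier_add:
  "u \<in> free_carrier A N \<Longrightarrow> v \<in> free_carrier A N \<Longrightarrow> free_add u v \<in> free_carrier A N"
proof -
  have "{p. free_add u v p \<noteq> 0} \<subseteq> {p. u p \<noteq> 0} \<union> {p. v p \<noteq> 0}"
    by (auto simp: free_add_def)
  then show "u \<in> free_carrier A N \<Longrightarrow> v \<in> free_carrier A N \<Longrightarrow> ?thesis"
    unfolding free_carrier_def by (blast intro: finite_subset)
qed

lemma free_carrier_neg: "u \<in> free_carrier A N \<Longrightarrow> free_neg u \<in> free_carrier A N"
  by (simp add: free_carrier_def free_neg_def)

lemma free_carrier_finite: "u \<in> free_carrier A N \<Longrightarrow> finite {p. u p \<noteq> 0}"
  by (simp add: free_carrier_def)

lemma supp_free_smult:
  "{q. free_smult H b u q \<noteq> 0} \<subseteq> (\<lambda>p. (b \<otimes>\<^bsub>group_ring H\<^esub> fst p, snd p)) ` {p. u p \<noteq> 0}"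
proof
  fix q assume "q \<in> {q. free_smult H b u q \<noteq> 0}"
  then have "sum u {p. u p \<noteq> 0 \<and> (b \<otimes>\<^bsub>group_ring H\<^esub> fst p, snd p) = q} \<noteq> 0"
    by (simp add: free_smult_def)
  then have "{p. u p \<noteq> 0 \<and> (b \<otimes>\<^bsub>group_ring H\<^esub> fst p, snd p) = q} \<noteq> {}"
    by (metis sum.empty)
  then show "q \<in> (\<lambda>p. (b \<otimes>\<^bsub>group_ring H\<^esub> fst p, snd p)) ` {p. u p \<noteq> 0}"
    by blast
qed

lemma free_carrier_smult:
  assumes "u \<in> free_carrier (carrier (group_ring H)) N"
  shows "free_smult H b u \<in> free_carrier (carrier (group_ring H)) N"
proof -
  let ?g = "\<lambda>p. (b \<otimes>\<^bsub>group_ring H\<^esub> fst p, snd p)"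
  have "?g ` {p. u p \<noteq> 0} \<subseteq> carrier (group_ring H) \<times> N"
    using assms by (auto simp: free_carrier_def group_ring_mult_carrier)
  moreover have "finite (?g ` {p. u p \<noteq> 0})"
    using assms by (simp add: free_carrier_def)
  ultimately show ?thesis
    using supp_free_smult[of b u] unfolding free_carrier_def mem_Collect_eq
    by (meson finite_subset subset_trans)
qed

lemma free_carrier_UNIV: "u \<in> free_carrier A N \<Longrightarrow> u \<in> free_carrier A UNIV"
  by (auto simp: free_carrier_def)

lemma free_expansion:
  assumes "finite S" "{p. u p \<noteq> 0} \<subseteq> S"
  shows "u = (\<lambda>q. \<Sum>p\<in>S. u p * free_delta p q)"
proof (rule ext)
  fix q
  have "(\<Sum>p\<in>S. u p * free_delta p q) = (\<Sum>p\<in>S. if p = q then u q else 0)"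
    by (rule sum.cong) (auto simp: free_delta_def)
  also have "\<dots> = u q"
    using assms by (auto simp: sum.delta')
  finally show "u q = (\<Sum>p\<in>S. u p * free_delta p q)" by simp
qed

definition tensor_equiv :: "('h, 'g) free_elem \<Rightarrow> ('h, 'g) free_elem \<Rightarrow> bool" where
  "tensor_equiv u v \<longleftrightarrow> (\<lambda>p. u p - v p) \<in> tensor_relations G H f M"

lemma tensor_equiv_refl: "tensor_equiv u u"
  by (simp add: tensor_equiv_def tensor_relations.rel_zero)

lemma tensor_equiv_sym: "tensor_equiv u v \<Longrightarrow> tensor_equiv v u"
  unfolding tensor_equiv_def by (drule tensor_relations_neg) simp

lemma tensor_equiv_trans [trans]: "tensor_equiv u v \<Longrightarrow> tensor_equiv v w \<Longrightarrow> tensor_equiv u w"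
  unfolding tensor_equiv_def by (drule (1) tensor_relations_add) simp

lemma tensor_equiv_add:
  "tensor_equiv u u' \<Longrightarrow> tensor_equiv v v' \<Longrightarrow> tensor_equiv (\<lambda>p. u p + v p) (\<lambda>p. u' p + v' p)"
  unfolding tensor_equiv_def by (drule (1) tensor_relations_add) (simp add: algebra_simps)

lemma tensor_equiv_zero_iff: "tensor_equiv u (\<lambda>p. 0) \<longleftrightarrow> u \<in> tensor_relations G H f M"
  by (simp add: tensor_equiv_def)

lemma tensor_relations_equiv:
  "tensor_equiv u v \<Longrightarrow> v \<in> tensor_relations G H f M \<Longrightarrow> u \<in> tensor_relations G H f M"
  using tensor_equiv_trans tensor_equiv_zero_iff by blast

lemma tensor_equiv_add_right:
  assumes "a \<in> carrier (group_ring H)" "m \<in> M" "m' \<in> M"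
  shows "tensor_equiv (free_delta (a, m \<oplus>\<^bsub>group_ring G\<^esub> m'))
           (\<lambda>p. free_delta (a, m) p + free_delta (a, m') p)"
proof -
  have "free_add (free_delta (a, m \<oplus>\<^bsub>group_ring G\<^esub> m'))
      (free_neg (free_add (free_delta (a, m)) (free_delta (a, m')))) \<in> tensor_generators G H f M"
    unfolding tensor_generators_def
    by (rule UnI1, rule UnI2, rule CollectI, rule exI[of _ a], rule exI[of _ m], rule exI[of _ m'])
       (simp add: assms)
  then show ?thesis
    by (auto simp: tensor_equiv_def free_add_def free_neg_def algebra_simps
             intro: tensor_relations.rel_gen)
qed

lemma tensor_equiv_balanced:
  assumes "a \<in> carrier (group_ring H)" "x \<in> carrier (group_ring G)" "m \<in> M"
  shows "tensor_equiv (free_delta (a \<otimes>\<^bsub>group_ring H\<^esub> group_ring_map G H f x, m))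
           (free_delta (a, x \<otimes>\<^bsub>group_ring G\<^esub> m))"
proof -
  have "free_add (free_delta (a \<otimes>\<^bsub>group_ring H\<^esub> group_ring_map G H f x, m))
      (free_neg (free_delta (a, x \<otimes>\<^bsub>group_ring G\<^esub> m))) \<in> tensor_generators G H f M"
    unfolding tensor_generators_def
    by (rule UnI2, rule CollectI, rule exI[of _ a], rule exI[of _ x], rule exI[of _ m])
       (simp add: assms)
  then show ?thesis
    by (auto simp: tensor_equiv_def free_add_def free_neg_def intro: tensor_relations.rel_gen)
qed

lemma mem_tensor_class_iff: "v \<in> tensor_class G H f M u \<longleftrightarrow> tensor_equiv v u"
proof
  assume "v \<in> tensor_class G H f M u"
  then obtain \<rho> where "\<rho> \<in> tensor_relations G H f M" "v = free_add u \<rho>"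
    by (auto simp: tensor_class_def)
  then show "tensor_equiv v u" by (simp add: tensor_equiv_def free_add_def)
next
  assume "tensor_equiv v u"
  then have "free_add u (\<lambda>p. v p - u p) \<in> tensor_class G H f M u"
    unfolding tensor_class_def tensor_equiv_def by (rule imageI)
  then show "v \<in> tensor_class G H f M u" by (simp add: free_add_def)
qed

lemma tensor_class_eqI: "tensor_equiv u v \<Longrightarrow> tensor_class G H f M u = tensor_class G H f M v"
  unfolding set_eq_iff mem_tensor_class_iff by (metis tensor_equiv_sym tensor_equiv_trans)

lemma some_in_tensor_class: "(SOME v. v \<in> tensor_class G H f M u) \<in> tensor_class G H f M u"
  by (rule someI[of _ u]) (simp add: mem_tensor_class_iff tensor_equiv_refl)

end

section \<open>The evaluation map a (x) m |-> a f(m)\<close>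

locale group_ring_epi = group_hom G H f + G: finite_group G + H: finite_group H
  for G (structure) and H (structure) and f +
  assumes surj: "f ` carrier G = carrier H"
begin

abbreviation F :: "('a \<Rightarrow> int) \<Rightarrow> ('c \<Rightarrow> int)" where
  "F \<equiv> group_ring_map G H f"

lemma group_ring_map_carrier: "F a \<in> carrier (group_ring H)"
  by (auto simp: group_ring_map_def group_ring_simps)

lemma sum_fibres_group_ring_map:
  "(\<Sum>g\<in>carrier G. a g * \<psi> (f g)) = (\<Sum>h\<in>carrier H. F a h * \<psi> h)"
proof -
  have fibre: "F a h * \<psi> h = (\<Sum>g\<in>{g \<in> carrier G. f g = h}. a g * \<psi> (f g))"
    if "h \<in> carrier H" for h
    using that by (simp add: group_ring_map_def sum_distrib_right)
  have "(\<Sum>h\<in>carrier H. F a h * \<psi> h)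
      = (\<Sum>h\<in>carrier H. \<Sum>g\<in>{g \<in> carrier G. f g = h}. a g * \<psi> (f g))"
    by (simp add: fibre)
  also have "\<dots> = (\<Sum>g\<in>carrier G. a g * \<psi> (f g))"
    by (rule sum.group[OF G.finite_carrier H.finite_carrier]) auto
  finally show ?thesis by simp
qed

lemma augmentation_group_ring_map: "augmentation H (F a) = augmentation G a"
  using sum_fibres_group_ring_map[of a "\<lambda>_. 1"] by (simp add: augmentation_def)

lemma group_ring_map_add: "F (a \<oplus>\<^bsub>group_ring G\<^esub> b) = F a \<oplus>\<^bsub>group_ring H\<^esub> F b"
  by (simp add: group_ring_map_def group_ring_simps sum.distrib fun_eq_iff)

lemma group_ring_map_basis: "g \<in> carrier G \<Longrightarrow> F (gr_basis g) = gr_basis (f g)"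
  by (auto simp: group_ring_map_def gr_basis_def fun_eq_iff G.finite_carrier)

lemma group_ring_map_basis_kernel: "k \<in> carrier G \<Longrightarrow> f k = \<one>\<^bsub>H\<^esub> \<Longrightarrow> F (gr_basis k) = \<one>\<^bsub>group_ring H\<^esub>"
  by (simp add: group_ring_map_basis H.group_ring_one_basis)

lemma group_ring_map_eq_sum_fibre:
  "h \<in> carrier H \<Longrightarrow> F a h = (\<Sum>g\<in>carrier G. a g * (if f g = h then 1 else 0))"
  using sum_fibres_group_ring_map[of a "\<lambda>k. if k = h then 1 else 0"]
  by (simp add: H.sum_delta_at if_distrib[of "\<lambda>c. _ * c"] cong: if_cong)

lemma group_ring_map_mult: "F (a \<otimes>\<^bsub>group_ring G\<^esub> b) = F a \<otimes>\<^bsub>group_ring H\<^esub> F b"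
proof (rule ext)
  fix h
  show "F (a \<otimes>\<^bsub>group_ring G\<^esub> b) h = (F a \<otimes>\<^bsub>group_ring H\<^esub> F b) h"
  proof (cases "h \<in> carrier H")
    case h: True
    let ?fibre = "\<lambda>z. if f z = h then 1 else 0 :: int"
    have translate: "(\<Sum>z\<in>carrier G. b (inv\<^bsub>G\<^esub> x \<otimes>\<^bsub>G\<^esub> z) * ?fibre z)
        = F b (inv\<^bsub>H\<^esub> f x \<otimes>\<^bsub>H\<^esub> h)" if x: "x \<in> carrier G" for x
    proof -
      have fibre_shift: "(f x \<otimes>\<^bsub>H\<^esub> f y = h) = (f y = inv\<^bsub>H\<^esub> f x \<otimes>\<^bsub>H\<^esub> h)"
        if "y \<in> carrier G" for y
        using x that h H.inv_solve_left[of "f y" "f x" h] by auto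
      have "(\<Sum>z\<in>carrier G. b (inv\<^bsub>G\<^esub> x \<otimes>\<^bsub>G\<^esub> z) * ?fibre z)
          = (\<Sum>y\<in>carrier G. b y * (if f y = inv\<^bsub>H\<^esub> f x \<otimes>\<^bsub>H\<^esub> h then 1 else 0))"
        using G.sum_left_translate[OF x, of "\<lambda>y. b y * ?fibre (x \<otimes>\<^bsub>G\<^esub> y)"] x
        by (simp add: fibre_shift)
      also have "\<dots> = F b (inv\<^bsub>H\<^esub> f x \<otimes>\<^bsub>H\<^esub> h)"
        using x h by (simp add: group_ring_map_eq_sum_fibre)
      finally show ?thesis .
    qed
    have "F (a \<otimes>\<^bsub>group_ring G\<^esub> b) h
        = (\<Sum>z\<in>carrier G. (\<Sum>x\<in>carrier G. a x * b (inv\<^bsub>G\<^esub> x \<otimes>\<^bsub>G\<^esub> z)) * ?fibre z)"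
      unfolding group_ring_map_eq_sum_fibre[OF h] group_ring_simps(2) by (auto intro!: sum.cong)
    also have "\<dots> = (\<Sum>x\<in>carrier G. a x * (\<Sum>z\<in>carrier G. b (inv\<^bsub>G\<^esub> x \<otimes>\<^bsub>G\<^esub> z) * ?fibre z))"
      by (simp only: sum_distrib_left sum_distrib_right mult.assoc) (rule sum.swap)
    also have "\<dots> = (\<Sum>x\<in>carrier G. a x * F b (inv\<^bsub>H\<^esub> f x \<otimes>\<^bsub>H\<^esub> h))"
      by (simp add: translate)
    also have "\<dots> = (\<Sum>k\<in>carrier H. F a k * F b (inv\<^bsub>H\<^esub> k \<otimes>\<^bsub>H\<^esub> h))"
      by (rule sum_fibres_group_ring_map)
    also have "\<dots> = (F a \<otimes>\<^bsub>group_ring H\<^esub> F b) h"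
      using h by (simp add: group_ring_simps)
    finally show ?thesis .
  qed (simp add: group_ring_map_def group_ring_simps(2))
qed

definition rep :: "'c \<Rightarrow> 'a" where
  "rep h = (SOME g. g \<in> carrier G \<and> f g = h)"

lemma rep_in_fibre:
  assumes "h \<in> carrier H"
  shows "rep h \<in> carrier G \<and> f (rep h) = h"
proof -
  from assms obtain g where "g \<in> carrier G \<and> f g = h"
    unfolding surj[symmetric] by (metis imageE)
  then show ?thesis
    unfolding rep_def by (rule someI)
qed

definition lift :: "('c \<Rightarrow> int) \<Rightarrow> ('a \<Rightarrow> int)" where
  "lift a = (\<lambda>g. if g \<in> carrier G \<and> g = rep (f g) then a (f g) else 0)"

lemma lift_carrier: "lift a \<in> carrier (group_ring G)"
  by (auto simp: lift_def group_ring_simps)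

lemma group_ring_map_aug_ideal_r: "m \<in> aug_ideal_r G r \<Longrightarrow> F m \<in> aug_ideal_r H r"
  by (simp add: G.mem_aug_ideal_r H.mem_aug_ideal_r group_ring_map_carrier augmentation_group_ring_map)

lemma group_ring_map_lift: "a \<in> carrier (group_ring H) \<Longrightarrow> F (lift a) = a"
proof (rule ext)
  fix h assume a: "a \<in> carrier (group_ring H)"
  show "F (lift a) h = a h"
  proof (cases "h \<in> carrier H")
    case True
    have "(z = rep (f z) \<and> f z = h) = (z = rep h)" for z
      using rep_in_fibre[OF True] by auto
    then have "F (lift a) h = (\<Sum>z\<in>carrier G. if z = rep h then a h else 0)"
      unfolding group_ring_map_eq_sum_fibre[OF True] by (intro sum.cong) (auto simp: lift_def)
    then show ?thesis using rep_in_fibre[OF True] by (simp add: G.sum_delta_at)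
  qed (use a in \<open>simp add: group_ring_map_def group_ring_simps\<close>)
qed

lemma lift_aug_ideal_r: "a \<in> aug_ideal_r H r \<Longrightarrow> lift a \<in> aug_ideal_r G r"
  using augmentation_group_ring_map[of "lift a"]
  by (simp add: G.mem_aug_ideal_r H.mem_aug_ideal_r lift_carrier group_ring_map_lift)

definition pair_eval :: "('c \<Rightarrow> int) \<times> ('a \<Rightarrow> int) \<Rightarrow> ('c \<Rightarrow> int)" where
  "pair_eval p = fst p \<otimes>\<^bsub>group_ring H\<^esub> F (snd p)"

definition free_eval :: "('c, 'a) free_elem \<Rightarrow> ('c \<Rightarrow> int)" where
  "free_eval u = (\<lambda>h. \<Sum>p | u p \<noteq> 0. u p * pair_eval p h)"

lemma free_eval_superset:
  "finite S \<Longrightarrow> {p. u p \<noteq> 0} \<subseteq> S \<Longrightarrow> free_eval u = (\<lambda>h. \<Sum>p\<in>S. u p * pair_eval p h)"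
  unfolding free_eval_def by (rule ext, rule sum.mono_neutral_left) auto

lemma free_eval_add:
  assumes "finite {p. u p \<noteq> 0}" "finite {p. v p \<noteq> 0}"
  shows "free_eval (free_add u v) = (\<lambda>h. free_eval u h + free_eval v h)"
proof -
  let ?S = "{p. u p \<noteq> 0} \<union> {p. v p \<noteq> 0}"
  have S: "finite ?S" using assms by simp
  have "free_eval (free_add u v) = (\<lambda>h. \<Sum>p\<in>?S. free_add u v p * pair_eval p h)"
    by (rule free_eval_superset[OF S]) (auto simp: free_add_def)
  also have "\<dots> = (\<lambda>h. (\<Sum>p\<in>?S. u p * pair_eval p h) + (\<Sum>p\<in>?S. v p * pair_eval p h))"
    by (simp add: free_add_def distrib_right sum.distrib)
  also have "\<dots> = (\<lambda>h. free_eval u h + free_eval v h)"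
    by (simp add: free_eval_superset[OF S, of u] free_eval_superset[OF S, of v])
  finally show ?thesis .
qed

lemma free_eval_neg: "free_eval (free_neg u) = (\<lambda>h. - free_eval u h)"
  by (simp add: free_eval_def free_neg_def sum_negf)

lemma free_eval_delta: "free_eval (free_delta q) = pair_eval q"
  by (simp add: free_eval_def free_delta_def)

lemma free_eval_generator:
  assumes "u \<in> tensor_generators G H f M"
  shows "free_eval u = (\<lambda>h. 0)"
proof -
  have eval_diff: "free_eval (free_add (free_delta q) (free_neg v)) = (\<lambda>h. 0)"
    if "finite {p. v p \<noteq> 0}" "free_eval v = pair_eval q" for q v
    using that by (simp add: free_eval_add free_eval_neg free_eval_delta supp_free_delta supp_free_neg)
  have finite_pair: "finite {p. free_add (free_delta q) (free_delta q') p \<noteq> 0}" for q q'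
    by (rule finite_subset[of _ "{q, q'}"]) (auto simp: free_add_def free_delta_def)
  have eval_pair: "free_eval (free_add (free_delta q) (free_delta q'))
      = pair_eval q \<oplus>\<^bsub>group_ring H\<^esub> pair_eval q'" for q q'
    by (simp add: free_eval_add free_eval_delta supp_free_delta group_ring_simps)
  show ?thesis
    using assms unfolding tensor_generators_def
  proof (elim UnE CollectE exE conjE)
    fix a a' m assume "a \<in> carrier (group_ring H)" "a' \<in> carrier (group_ring H)"
      and "u = free_add (free_delta (a \<oplus>\<^bsub>group_ring H\<^esub> a', m))
                 (free_neg (free_add (free_delta (a, m)) (free_delta (a', m))))"
    then show ?thesis
      by (simp add: eval_diff finite_pair eval_pair pair_eval_def H.ZG.l_distr group_ring_map_carrier)
  next
    fix a m m' assume "a \<in> carrier (group_ring H)"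
      and "u = free_add (free_delta (a, m \<oplus>\<^bsub>group_ring G\<^esub> m'))
                 (free_neg (free_add (free_delta (a, m)) (free_delta (a, m'))))"
    then show ?thesis
      by (simp add: eval_diff finite_pair eval_pair pair_eval_def H.ZG.r_distr group_ring_map_carrier group_ring_map_add)
  next
    fix a x m assume "a \<in> carrier (group_ring H)"
      and "u = free_add (free_delta (a \<otimes>\<^bsub>group_ring H\<^esub> F x, m))
                 (free_neg (free_delta (a, x \<otimes>\<^bsub>group_ring G\<^esub> m)))"
    then show ?thesis
      by (simp add: eval_diff free_eval_delta supp_free_delta pair_eval_def H.ZG.m_assoc group_ring_map_carrier group_ring_map_mult)
  qed
qed

lemma tensor_relations_eval:
  "u \<in> tensor_relations G H f M
    \<Longrightarrow> u \<in> free_carrier (carrier (group_ring H)) UNIV \<and> free_eval u = (\<lambda>h. 0)"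
proof (induction rule: tensor_relations.induct)
  case rel_zero
  then show ?case by (simp add: free_carrier_def free_eval_def)
next
  case (rel_gen u)
  then have "u \<in> free_carrier (carrier (group_ring H)) UNIV"
    unfolding tensor_generators_def
    by (auto intro!: free_carrier_add free_carrier_neg free_carrier_delta
             simp: group_ring_mult_carrier H.ZG.add.m_closed)
  with rel_gen show ?case by (simp add: free_eval_generator)
next
  case (rel_add u v)
  then have "finite {p. u p \<noteq> 0}" "finite {p. v p \<noteq> 0}"
    by (auto intro: free_carrier_finite)
  with rel_add show ?case by (simp add: free_carrier_add free_eval_add)
next
  case (rel_neg u)
  then show ?case by (simp add: free_carrier_neg free_eval_neg)
qed

lemma tensor_class_eval:
  assumes "u \<in> free_carrier (carrier (group_ring H)) UNIV" "v \<in> tensor_class G H f M u"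
  shows "v \<in> free_carrier (carrier (group_ring H)) UNIV \<and> free_eval v = free_eval u"
proof -
  from assms(2) obtain \<rho> where \<rho>: "\<rho> \<in> tensor_relations G H f M" and v: "v = free_add u \<rho>"
    by (auto simp: tensor_class_def)
  have "finite {p. u p \<noteq> 0}" "finite {p. \<rho> p \<noteq> 0}"
    using assms(1) tensor_relations_eval[OF \<rho>] by (auto intro: free_carrier_finite)
  with assms(1) tensor_relations_eval[OF \<rho>] show ?thesis
    unfolding v by (simp add: free_carrier_add free_eval_add)
qed

lemma free_eval_smult:
  assumes b: "b \<in> carrier (group_ring H)" and u: "u \<in> free_carrier (carrier (group_ring H)) UNIV"
  shows "free_eval (free_smult H b u) = b \<otimes>\<^bsub>group_ring H\<^esub> free_eval u"
proof -
  let ?S = "{p. u p \<noteq> 0}"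
  let ?g = "\<lambda>p. (b \<otimes>\<^bsub>group_ring H\<^esub> fst p, snd p)"
  have S: "finite ?S" "?S \<subseteq> carrier (group_ring H) \<times> UNIV"
    using u by (auto simp: free_carrier_def)
  note supp = supp_free_smult[of H b u]
  have eval_g: "pair_eval (?g p) = b \<otimes>\<^bsub>group_ring H\<^esub> pair_eval p" if "p \<in> ?S" for p
    using S(2) that b unfolding pair_eval_def by (auto simp: H.ZG.m_assoc group_ring_map_carrier)
  have "free_eval (free_smult H b u) = (\<lambda>h. \<Sum>q\<in>?g ` ?S. free_smult H b u q * pair_eval q h)"
    by (rule free_eval_superset[OF finite_imageI[OF S(1)] supp])
  also have "\<dots> = (\<lambda>h. \<Sum>q\<in>?g ` ?S. \<Sum>p | p \<in> ?S \<and> ?g p = q. u p * pair_eval (?g p) h)"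
    by (auto simp: free_smult_def sum_distrib_right fun_eq_iff intro!: sum.cong)
  also have "\<dots> = (\<lambda>h. \<Sum>p\<in>?S. u p * pair_eval (?g p) h)"
    by (rule ext, rule sum.image_gen[OF S(1), symmetric])
  also have "\<dots> = (\<lambda>h. \<Sum>p\<in>?S. u p * (b \<otimes>\<^bsub>group_ring H\<^esub> pair_eval p) h)"
    by (simp add: eval_g)
  also have "\<dots> = b \<otimes>\<^bsub>group_ring H\<^esub> free_eval u"
    by (simp add: free_eval_def group_ring_mult_sum_right)
  finally show ?thesis .
qed

definition tensor_eval :: "('c, 'a) free_elem set \<Rightarrow> ('c \<Rightarrow> int)" where
  "tensor_eval S = free_eval (SOME u. u \<in> S)"

lemma some_in_tensor_class_eval:
  assumes "u \<in> free_carrier (carrier (group_ring H)) UNIV"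
  shows "(SOME v. v \<in> tensor_class G H f M u) \<in> free_carrier (carrier (group_ring H)) UNIV"
    and "free_eval (SOME v. v \<in> tensor_class G H f M u) = free_eval u"
  using tensor_class_eval[OF assms some_in_tensor_class] by auto

lemma tensor_eval_class:
  "u \<in> free_carrier (carrier (group_ring H)) UNIV
    \<Longrightarrow> tensor_eval (tensor_class G H f M u) = free_eval u"
  unfolding tensor_eval_def by (rule some_in_tensor_class_eval(2))

lemma tensor_carrier_elem:
  assumes "S \<in> tensor_carrier G H f M"
  obtains u where "u \<in> free_carrier (carrier (group_ring H)) UNIV" "S = tensor_class G H f M u"
  using assms free_carrier_UNIV unfolding tensor_carrier_def by blast

lemma tensor_eval_add:
  assumes "S1 \<in> tensor_carrier G H f M" "S2 \<in> tensor_carrier G H f M"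
  shows "tensor_eval (tensor_add G H f M S1 S2) = tensor_eval S1 \<oplus>\<^bsub>group_ring H\<^esub> tensor_eval S2"
proof -
  obtain u v where u: "u \<in> free_carrier (carrier (group_ring H)) UNIV" "S1 = tensor_class G H f M u"
    and v: "v \<in> free_carrier (carrier (group_ring H)) UNIV" "S2 = tensor_class G H f M v"
    using assms by (meson tensor_carrier_elem)
  let ?u = "SOME x. x \<in> S1" and ?v = "SOME x. x \<in> S2"
  note u' = some_in_tensor_class_eval[where M=M, OF u(1), folded u(2)]
  note v' = some_in_tensor_class_eval[where M=M, OF v(1), folded v(2)]
  have "tensor_eval (tensor_add G H f M S1 S2) = free_eval (free_add ?u ?v)"
    unfolding tensor_add_def by (rule tensor_eval_class[OF free_carrier_add[OF u'(1) v'(1)]])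
  also have "\<dots> = free_eval u \<oplus>\<^bsub>group_ring H\<^esub> free_eval v"
    using u' v' free_carrier_finite[OF u'(1)] free_carrier_finite[OF v'(1)]
    by (simp add: free_eval_add group_ring_simps(5))
  finally show ?thesis
    using u v by (simp add: tensor_eval_class)
qed

lemma tensor_eval_smult:
  assumes "b \<in> carrier (group_ring H)" "S \<in> tensor_carrier G H f M"
  shows "tensor_eval (tensor_smult G H f M b S) = b \<otimes>\<^bsub>group_ring H\<^esub> tensor_eval S"
proof -
  obtain u where u: "u \<in> free_carrier (carrier (group_ring H)) UNIV" "S = tensor_class G H f M u"
    using assms(2) by (rule tensor_carrier_elem)
  note u' = some_in_tensor_class_eval[where M=M, OF u(1), folded u(2)]
  have "tensor_eval (tensor_smult G H f M b S) = free_eval (free_smult H b (SOME x. x \<in> S))"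
    unfolding tensor_smult_def by (rule tensor_eval_class[OF free_carrier_smult[OF u'(1)]])
  also have "\<dots> = b \<otimes>\<^bsub>group_ring H\<^esub> free_eval u"
    using u' assms(1) by (simp add: free_eval_smult)
  finally show ?thesis
    using u by (simp add: tensor_eval_class)
qed

lemma free_eval_equiv:
  assumes "u \<in> free_carrier (carrier (group_ring H)) UNIV" "v \<in> free_carrier (carrier (group_ring H)) UNIV"
    and "tensor_equiv G H f M u v"
  shows "free_eval u = free_eval v"
proof -
  have "free_add u (free_neg v) \<in> tensor_relations G H f M"
    using assms(3) by (simp add: tensor_equiv_def free_add_def free_neg_def)
  then have "free_eval (free_add u (free_neg v)) = (\<lambda>h. 0)"
    by (simp add: tensor_relations_eval)
  then show ?thesis
    using free_carrier_finite[OF assms(1)] free_carrier_finite[OF assms(2)]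
    by (simp add: free_eval_add free_eval_neg supp_free_neg fun_eq_iff)
qed

end

section \<open>Tensors of the form 1 (x) m\<close>

locale group_ring_epi_ideal = group_ring_epi +
  fixes M :: "('a \<Rightarrow> int) set"
  assumes ideal_M: "ideal M (group_ring G)"
begin

abbreviation one_tensor :: "('a \<Rightarrow> int) \<Rightarrow> ('c, 'a) free_elem" where
  "one_tensor m \<equiv> free_delta (\<one>\<^bsub>group_ring H\<^esub>, m)"

lemma one_tensor_add:
  assumes "m \<in> M" "m' \<in> M"
  shows "tensor_equiv G H f M (one_tensor (\<lambda>z. m z + m' z)) (\<lambda>p. one_tensor m p + one_tensor m' p)"
  using tensor_equiv_add_right[OF H.ZG.one_closed assms] by (simp add: group_ring_simps(5))

lemma one_tensor_zero: "one_tensor (\<lambda>z. 0) \<in> tensor_relations G H f M"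
proof -
  have "tensor_equiv G H f M (one_tensor (\<lambda>z. 0)) (\<lambda>p. one_tensor (\<lambda>z. 0) p + one_tensor (\<lambda>z. 0) p)"
    using one_tensor_add[OF G.ideal_group_ring_zero G.ideal_group_ring_zero, OF ideal_M ideal_M]
    by simp
  then have "(\<lambda>p. - (one_tensor (\<lambda>z. 0) p - (one_tensor (\<lambda>z. 0) p + one_tensor (\<lambda>z. 0) p)))
      \<in> tensor_relations G H f M"
    unfolding tensor_equiv_def by (rule tensor_relations_neg)
  then show ?thesis by simp
qed

lemma one_tensor_scale:
  assumes m: "m \<in> M"
  shows "tensor_equiv G H f M (one_tensor (\<lambda>z. c * m z)) (\<lambda>p. c * one_tensor m p)"
proof (induction c rule: int_induct[where k=0])
  case base
  then show ?case by (simp add: tensor_equiv_def one_tensor_zero)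
next
  case (step1 i)
  have "(\<lambda>z. (i + 1) * m z) = (\<lambda>z. i * m z + m z)"
    by (simp add: fun_eq_iff distrib_right)
  then have "tensor_equiv G H f M (one_tensor (\<lambda>z. (i + 1) * m z))
      (\<lambda>p. one_tensor (\<lambda>z. i * m z) p + one_tensor m p)"
    by (simp only:) (intro one_tensor_add m G.ideal_group_ring_scale[OF ideal_M])
  also have "tensor_equiv G H f M \<dots> (\<lambda>p. i * one_tensor m p + one_tensor m p)"
    using step1 by (intro tensor_equiv_add tensor_equiv_refl)
  also have "(\<lambda>p. i * one_tensor m p + one_tensor m p) = (\<lambda>p. (i + 1) * one_tensor m p)"
    by (simp add: fun_eq_iff distrib_right)
  finally show ?case .
next
  case (step2 i)
  have "(\<lambda>z. (i - 1) * m z + m z) = (\<lambda>z. i * m z)"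
    by (simp add: fun_eq_iff left_diff_distrib)
  then have "tensor_equiv G H f M (one_tensor (\<lambda>z. i * m z))
      (\<lambda>p. one_tensor (\<lambda>z. (i - 1) * m z) p + one_tensor m p)"
    using one_tensor_add[OF G.ideal_group_ring_scale[OF ideal_M m, of "i - 1"] m] by (simp only:)
  then have "tensor_equiv G H f M (\<lambda>p. one_tensor (\<lambda>z. (i - 1) * m z) p + one_tensor m p)
      (one_tensor (\<lambda>z. i * m z))"
    by (rule tensor_equiv_sym)
  also have "tensor_equiv G H f M \<dots> (\<lambda>p. i * one_tensor m p)"
    by (rule step2(2))
  finally have "tensor_equiv G H f M
      (\<lambda>p. one_tensor (\<lambda>z. (i - 1) * m z) p + one_tensor m p + - one_tensor m p)
      (\<lambda>p. i * one_tensor m p + - one_tensor m p)"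
    by (intro tensor_equiv_add tensor_equiv_refl)
  moreover have "(\<lambda>p. i * one_tensor m p + - one_tensor m p) = (\<lambda>p. (i - 1) * one_tensor m p)"
    by (simp add: fun_eq_iff left_diff_distrib)
  ultimately show ?case by simp
qed

lemma one_tensor_sum:
  assumes "finite S" "\<And>p. p \<in> S \<Longrightarrow> x p \<in> M"
  shows "tensor_equiv G H f M (one_tensor (\<lambda>z. \<Sum>p\<in>S. c p * x p z))
           (\<lambda>q. \<Sum>p\<in>S. c p * one_tensor (x p) q)"
  using assms
proof (induction S rule: finite_induct)
  case empty
  then show ?case by (simp add: tensor_equiv_def one_tensor_zero)
next
  case (insert a S)
  have "tensor_equiv G H f M (one_tensor (\<lambda>z. c a * x a z + (\<Sum>p\<in>S. c p * x p z)))
      (\<lambda>q. one_tensor (\<lambda>z. c a * x a z) q + one_tensor (\<lambda>z. \<Sum>p\<in>S. c p * x p z) q)"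
    using insert by (intro one_tensor_add G.ideal_group_ring_scale[OF ideal_M]
                           G.ideal_group_ring_sum[OF ideal_M]) auto
  also have "tensor_equiv G H f M \<dots> (\<lambda>q. c a * one_tensor (x a) q + (\<Sum>p\<in>S. c p * one_tensor (x p) q))"
    using insert by (intro tensor_equiv_add one_tensor_scale) auto
  finally show ?case
    using insert by simp
qed

lemma free_eval_one_tensor: "free_eval (one_tensor m) = F m"
  by (simp add: free_eval_delta pair_eval_def group_ring_map_carrier)

lemma tensor_equiv_one_tensor_lift:
  assumes "a \<in> carrier (group_ring H)" "m \<in> M"
  shows "tensor_equiv G H f M (free_delta (a, m)) (one_tensor (lift a \<otimes>\<^bsub>group_ring G\<^esub> m))"
proof -
  have "\<one>\<^bsub>group_ring H\<^esub> \<otimes>\<^bsub>group_ring H\<^esub> F (lift a) = a"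
    using assms(1) by (simp only: group_ring_map_lift H.ZG.l_one)
  then show ?thesis
    using tensor_equiv_balanced[where f=f, OF H.ZG.one_closed lift_carrier[of a] assms(2)]
    by (simp only:)
qed

lemma free_carrier_equiv_one_tensor:
  assumes u: "u \<in> free_carrier (carrier (group_ring H)) M"
  obtains m where "m \<in> M" "tensor_equiv G H f M u (one_tensor m)"
proof -
  let ?S = "{p. u p \<noteq> 0}"
  let ?x = "\<lambda>p. lift (fst p) \<otimes>\<^bsub>group_ring G\<^esub> snd p"
  have S: "finite ?S" "?S \<subseteq> carrier (group_ring H) \<times> M"
    using u by (auto simp: free_carrier_def)
  have x: "?x p \<in> M" if "p \<in> ?S" for p
  proof -
    have "snd p \<in> M" using S(2) that by auto
    then show ?thesis by (rule ideal.I_l_closed[OF ideal_M _ lift_carrier])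
  qed
  have rel: "(\<lambda>q. free_delta p q - one_tensor (?x p) q) \<in> tensor_relations G H f M"
    if "p \<in> ?S" for p
    using tensor_equiv_one_tensor_lift[of "fst p" "snd p"] S(2) that
    by (auto simp: tensor_equiv_def)
  have "(\<lambda>q. \<Sum>p\<in>?S. u p * (free_delta p q - one_tensor (?x p) q)) \<in> tensor_relations G H f M"
    by (rule tensor_relations_sum[OF S(1) rel])
  then have "tensor_equiv G H f M u (\<lambda>q. \<Sum>p\<in>?S. u p * one_tensor (?x p) q)"
    unfolding tensor_equiv_def
    by (subst free_expansion[OF S(1) order_refl]) (simp add: right_diff_distrib sum_subtractf)
  also have "tensor_equiv G H f M \<dots> (one_tensor (\<lambda>z. \<Sum>p\<in>?S. u p * ?x p z))"
    by (rule tensor_equiv_sym, rule one_tensor_sum) (use S x in auto)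
  finally show ?thesis
    using G.ideal_group_ring_sum[OF ideal_M S(1) x] by (rule that[rotated])
qed

definition tensor_null :: "('a \<Rightarrow> int) set" where
  "tensor_null = {m \<in> M. one_tensor m \<in> tensor_relations G H f M}"

lemma tensor_null_zero: "(\<lambda>z. 0) \<in> tensor_null"
  by (simp add: tensor_null_def one_tensor_zero G.ideal_group_ring_zero[OF ideal_M])

lemma tensor_null_add: "m \<in> tensor_null \<Longrightarrow> m' \<in> tensor_null \<Longrightarrow> (\<lambda>z. m z + m' z) \<in> tensor_null"
  unfolding tensor_null_def
  by (auto intro: G.ideal_group_ring_add[OF ideal_M] tensor_relations_equiv[OF one_tensor_add]
                  tensor_relations_add)

lemma tensor_null_scale: "m \<in> tensor_null \<Longrightarrow> (\<lambda>z. c * m z) \<in> tensor_null"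
  unfolding tensor_null_def
  by (auto intro: G.ideal_group_ring_scale[OF ideal_M] tensor_relations_equiv[OF one_tensor_scale]
                  tensor_relations_scale)

lemma tensor_null_sum:
  assumes "finite S" "\<And>p. p \<in> S \<Longrightarrow> x p \<in> tensor_null"
  shows "(\<lambda>z. \<Sum>p\<in>S. c p * x p z) \<in> tensor_null"
proof -
  have x: "x p \<in> M" "one_tensor (x p) \<in> tensor_relations G H f M" if "p \<in> S" for p
    using assms(2)[OF that] by (auto simp: tensor_null_def)
  have "(\<lambda>q. \<Sum>p\<in>S. c p * one_tensor (x p) q) \<in> tensor_relations G H f M"
    by (rule tensor_relations_sum[OF assms(1) x(2)])
  moreover have "tensor_equiv G H f M (one_tensor (\<lambda>z. \<Sum>p\<in>S. c p * x p z))
      (\<lambda>q. \<Sum>p\<in>S. c p * one_tensor (x p) q)"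
    by (rule one_tensor_sum) (use assms(1) x in auto)
  ultimately have "one_tensor (\<lambda>z. \<Sum>p\<in>S. c p * x p z) \<in> tensor_relations G H f M"
    by (rule tensor_relations_equiv[rotated])
  moreover have "(\<lambda>z. \<Sum>p\<in>S. c p * x p z) \<in> M"
    by (rule G.ideal_group_ring_sum[OF ideal_M assms(1)]) (rule x(1))
  ultimately show ?thesis
    by (simp add: tensor_null_def)
qed

lemma tensor_null_translate:
  assumes x: "x \<in> carrier (group_ring G)" "F x = \<one>\<^bsub>group_ring H\<^esub>" and m: "m \<in> M"
  shows "(\<lambda>z. (x \<otimes>\<^bsub>group_ring G\<^esub> m) z - m z) \<in> tensor_null"
proof -
  let ?d = "\<lambda>z. (x \<otimes>\<^bsub>group_ring G\<^esub> m) z - m z"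
  have xm: "x \<otimes>\<^bsub>group_ring G\<^esub> m \<in> M"
    by (rule ideal.I_l_closed[OF ideal_M m x(1)])
  have d: "?d \<in> M"
    using xm m by (rule G.ideal_group_ring_diff[OF ideal_M])
  have "tensor_equiv G H f M (one_tensor m) (one_tensor (\<lambda>z. ?d z + m z))"
    using tensor_equiv_balanced[where f=f, OF H.ZG.one_closed x(1) m] x(2) by simp
  also have "tensor_equiv G H f M \<dots> (\<lambda>p. one_tensor ?d p + one_tensor m p)"
    using d m by (rule one_tensor_add)
  finally have "(\<lambda>p. - (one_tensor m p - (one_tensor ?d p + one_tensor m p))) \<in> tensor_relations G H f M"
    unfolding tensor_equiv_def by (rule tensor_relations_neg)
  then show ?thesis
    using d by (simp add: tensor_null_def)
qed

end

section \<open>Injectivity for the ideal (I_G, r)\<close>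

locale group_ring_epi_aug = group_ring_epi +
  fixes r :: int
  assumes coprime_order: "coprime r (int (order G))"

sublocale group_ring_epi_aug \<subseteq> group_ring_epi_ideal G H f "aug_ideal_r G r"
  by (rule group_ring_epi_ideal.intro[OF group_ring_epi_axioms
        group_ring_epi_ideal_axioms.intro[OF G.aug_ideal_r_is_ideal]])

context group_ring_epi_aug
begin

lemma tensor_null_r_multiple:
  assumes k: "k \<in> carrier G" "f k = \<one>\<^bsub>H\<^esub>"
  shows "(\<lambda>z. r * basis_diff k \<one>\<^bsub>G\<^esub> z) \<in> tensor_null"
proof -
  have eq: "(\<lambda>z. (gr_basis k \<otimes>\<^bsub>group_ring G\<^esub> gr_int G r) z - gr_int G r z)
      = (\<lambda>z. r * basis_diff k \<one>\<^bsub>G\<^esub> z)"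
    using k by (simp add: G.group_ring_mult_gr_int_right G.gr_basis_carrier)
               (simp add: G.gr_int_eq right_diff_distrib)
  then show ?thesis
    using tensor_null_translate[OF G.gr_basis_carrier[OF k(1)] group_ring_map_basis_kernel[OF k]
                                   G.gr_int_mem_aug_ideal_r]
    by (simp only: eq)
qed

lemma tensor_null_power:
  assumes k: "k \<in> carrier G" "f k = \<one>\<^bsub>H\<^esub>"
  shows "(\<lambda>z. basis_diff (k [^]\<^bsub>G\<^esub> n) \<one>\<^bsub>G\<^esub> z - int n * basis_diff k \<one>\<^bsub>G\<^esub> z) \<in> tensor_null"
proof (induction n)
  case 0
  then show ?case using tensor_null_zero by simp
next
  case (Suc n)
  let ?y = "k [^]\<^bsub>G\<^esub> n"
  have y: "?y \<in> carrier G" using k by simp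
  \<comment> \<open>writing [g] for gr_basis g:
    [k y] - [1] - (n + 1)([k] - [1]) = ([k]([y] - [1]) - ([y] - [1])) + ([y] - [1] - n([k] - [1]))\<close>
  have "(\<lambda>z. (gr_basis k \<otimes>\<^bsub>group_ring G\<^esub> basis_diff ?y \<one>\<^bsub>G\<^esub>) z - basis_diff ?y \<one>\<^bsub>G\<^esub> z
          + (basis_diff ?y \<one>\<^bsub>G\<^esub> z - int n * basis_diff k \<one>\<^bsub>G\<^esub> z)) \<in> tensor_null"
    using k y Suc.IH
    by (intro tensor_null_add tensor_null_translate G.gr_basis_carrier group_ring_map_basis_kernel
              G.basis_diff_mem_aug_ideal_r) auto
  moreover have "k [^]\<^bsub>G\<^esub> Suc n = k \<otimes>\<^bsub>G\<^esub> ?y"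
    by (rule G.nat_pow_Suc2[OF k(1)])
  ultimately show ?case
    using k y by (simp add: G.gr_basis_mult_basis_diff algebra_simps)
qed

lemma tensor_null_basis_diff_one:
  assumes k: "k \<in> carrier G" "f k = \<one>\<^bsub>H\<^esub>"
  shows "basis_diff k \<one>\<^bsub>G\<^esub> \<in> tensor_null"
proof -
  let ?n = "int (order G)"
  have "(\<lambda>z. basis_diff (k [^]\<^bsub>G\<^esub> order G) \<one>\<^bsub>G\<^esub> z - ?n * basis_diff k \<one>\<^bsub>G\<^esub> z) \<in> tensor_null"
    by (rule tensor_null_power[OF k])
  then have "(\<lambda>z. - (?n * basis_diff k \<one>\<^bsub>G\<^esub> z)) \<in> tensor_null"
    using k by (simp add: G.pow_order_eq_1 G.finite_carrier)
  then have "(\<lambda>z. - 1 * - (?n * basis_diff k \<one>\<^bsub>G\<^esub> z)) \<in> tensor_null"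
    by (rule tensor_null_scale)
  then have order_multiple: "(\<lambda>z. ?n * basis_diff k \<one>\<^bsub>G\<^esub> z) \<in> tensor_null"
    by simp
  obtain u v where uv: "u * r + v * ?n = 1"
    using bezout_int[of r ?n] coprime_order by (auto simp: coprime_iff_gcd_eq_1)
  have "basis_diff k \<one>\<^bsub>G\<^esub> = (\<lambda>z. (u * r + v * ?n) * basis_diff k \<one>\<^bsub>G\<^esub> z)"
    by (simp add: uv)
  also have "\<dots> = (\<lambda>z. u * (r * basis_diff k \<one>\<^bsub>G\<^esub> z) + v * (?n * basis_diff k \<one>\<^bsub>G\<^esub> z))"
    by (simp only: distrib_right mult.assoc)
  also have "\<dots> \<in> tensor_null"
    by (intro tensor_null_add tensor_null_scale[OF tensor_null_r_multiple[OF k]]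
              tensor_null_scale[OF order_multiple])
  finally show ?thesis .
qed

lemma tensor_null_basis_diff:
  assumes "x \<in> carrier G" "y \<in> carrier G" "f x = f y"
  shows "basis_diff x y \<in> tensor_null"
proof -
  let ?k = "x \<otimes>\<^bsub>G\<^esub> inv\<^bsub>G\<^esub> y"
  have k: "?k \<in> carrier G" "f ?k = \<one>\<^bsub>H\<^esub>"
    using assms by (simp_all add: H.r_inv)
  have x: "?k \<otimes>\<^bsub>G\<^esub> y = x"
    using assms by (simp add: G.m_assoc)
  \<comment> \<open>[x] - [y] = ([k]([y] - [1]) - ([y] - [1])) + ([k] - [1])\<close>
  have "(\<lambda>z. (gr_basis ?k \<otimes>\<^bsub>group_ring G\<^esub> basis_diff y \<one>\<^bsub>G\<^esub>) z - basis_diff y \<one>\<^bsub>G\<^esub> z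
          + basis_diff ?k \<one>\<^bsub>G\<^esub> z) \<in> tensor_null"
    using k assms
    by (intro tensor_null_add tensor_null_translate G.gr_basis_carrier group_ring_map_basis_kernel
              G.basis_diff_mem_aug_ideal_r tensor_null_basis_diff_one) auto
  then show ?thesis
    using k assms by (simp add: G.gr_basis_mult_basis_diff x)
qed

lemma tensor_null_kernel:
  assumes m: "m \<in> aug_ideal_r G r" and Fm: "F m = (\<lambda>h. 0)"
  shows "m \<in> tensor_null"
proof -
  have expand: "(\<Sum>g\<in>carrier G. m g * gr_basis g z) = m z" for z
    using m G.finite_carrier
    by (simp add: gr_basis_def if_distrib[of "\<lambda>c. _ * c"] sum.delta' cong: if_cong)
       (auto simp: G.mem_aug_ideal_r group_ring_simps)
  have reps: "(\<Sum>g\<in>carrier G. m g * gr_basis (rep (f g)) z) = 0" for z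
    using sum_fibres_group_ring_map[of m "\<lambda>h. gr_basis (rep h) z"] by (simp add: Fm)
  have "(\<lambda>z. \<Sum>g\<in>carrier G. m g * basis_diff g (rep (f g)) z) \<in> tensor_null"
    using rep_in_fibre by (intro tensor_null_sum G.finite_carrier tensor_null_basis_diff) auto
  also have "(\<lambda>z. \<Sum>g\<in>carrier G. m g * basis_diff g (rep (f g)) z) = m"
    by (simp add: right_diff_distrib sum_subtractf expand reps fun_eq_iff)
  finally show ?thesis .
qed

lemma tensor_relations_of_eval_zero:
  assumes u: "u \<in> free_carrier (carrier (group_ring H)) (aug_ideal_r G r)"
    and eval: "free_eval u = (\<lambda>h. 0)"
  shows "u \<in> tensor_relations G H f (aug_ideal_r G r)"
proof -
  obtain m where m: "m \<in> aug_ideal_r G r"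
    and equiv: "tensor_equiv G H f (aug_ideal_r G r) u (one_tensor m)"
    using free_carrier_equiv_one_tensor[OF u] .
  have "u \<in> free_carrier (carrier (group_ring H)) UNIV"
    by (rule free_carrier_UNIV[OF u])
  moreover have "one_tensor m \<in> free_carrier (carrier (group_ring H)) UNIV"
    by (rule free_carrier_delta) simp_all
  ultimately have "F m = free_eval u"
    using free_eval_equiv[OF _ _ equiv] by (simp add: free_eval_one_tensor)
  then have "m \<in> tensor_null"
    using tensor_null_kernel[OF m] eval by simp
  then show ?thesis
    using equiv by (auto simp: tensor_null_def intro: tensor_relations_equiv)
qed

lemma inj_on_tensor_eval: "inj_on tensor_eval (tensor_carrier G H f (aug_ideal_r G r))"
proof (rule inj_onI)
  fix S1 S2
  assume "S1 \<in> tensor_carrier G H f (aug_ideal_r G r)" "S2 \<in> tensor_carrier G H f (aug_ideal_r G r)"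
  then obtain u v where u: "u \<in> free_carrier (carrier (group_ring H)) (aug_ideal_r G r)"
      "S1 = tensor_class G H f (aug_ideal_r G r) u"
    and v: "v \<in> free_carrier (carrier (group_ring H)) (aug_ideal_r G r)"
      "S2 = tensor_class G H f (aug_ideal_r G r) v"
    by (auto simp: tensor_carrier_def)
  have u': "u \<in> free_carrier (carrier (group_ring H)) UNIV"
    and v': "v \<in> free_carrier (carrier (group_ring H)) UNIV"
    using u(1) v(1) by (auto intro: free_carrier_UNIV)
  assume "tensor_eval S1 = tensor_eval S2"
  then have "free_eval u = free_eval v"
    using u v u' v' by (simp add: tensor_eval_class)
  then have "free_eval (free_add u (free_neg v)) = (\<lambda>h. 0)"
    using free_carrier_finite[OF u'] free_carrier_finite[OF v']
    by (simp add: free_eval_add free_eval_neg supp_free_neg)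
  then have "free_add u (free_neg v) \<in> tensor_relations G H f (aug_ideal_r G r)"
    using u v by (intro tensor_relations_of_eval_zero free_carrier_add free_carrier_neg)
  then have "tensor_equiv G H f (aug_ideal_r G r) u v"
    by (simp add: tensor_equiv_def free_add_def free_neg_def)
  then show "S1 = S2"
    using u v by (simp add: tensor_class_eqI)
qed

lemma tensor_eval_image:
  "tensor_eval ` tensor_carrier G H f (aug_ideal_r G r) = aug_ideal_r H r"
proof
  show "tensor_eval ` tensor_carrier G H f (aug_ideal_r G r) \<subseteq> aug_ideal_r H r"
    unfolding tensor_carrier_def
  proof clarify
    fix u assume u: "u \<in> free_carrier (carrier (group_ring H)) (aug_ideal_r G r)"
    have "pair_eval p \<in> aug_ideal_r H r" if "u p \<noteq> 0" for p
    proof -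
      have "snd p \<in> aug_ideal_r G r" "fst p \<in> carrier (group_ring H)"
        using u that by (auto simp: free_carrier_def)
      then show ?thesis
        unfolding pair_eval_def
        by (rule ideal.I_l_closed[OF H.aug_ideal_r_is_ideal group_ring_map_aug_ideal_r])
    qed
    then have "free_eval u \<in> aug_ideal_r H r"
      unfolding free_eval_def using free_carrier_finite[OF u]
      by (intro H.ideal_group_ring_sum[OF H.aug_ideal_r_is_ideal]) auto
    moreover have "u \<in> free_carrier (carrier (group_ring H)) UNIV"
      using u by (rule free_carrier_UNIV)
    ultimately show "tensor_eval (tensor_class G H f (aug_ideal_r G r) u) \<in> aug_ideal_r H r"
      by (simp add: tensor_eval_class)
  qed
next
  show "aug_ideal_r H r \<subseteq> tensor_eval ` tensor_carrier G H f (aug_ideal_r G r)"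
  proof
    fix a assume a: "a \<in> aug_ideal_r H r"
    then have a_carrier: "a \<in> carrier (group_ring H)"
      by (simp add: H.mem_aug_ideal_r)
    have "one_tensor (lift a) \<in> free_carrier (carrier (group_ring H)) (aug_ideal_r G r)"
      using a by (intro free_carrier_delta) (simp_all add: lift_aug_ideal_r)
    moreover have "tensor_eval (tensor_class G H f (aug_ideal_r G r) (one_tensor (lift a))) = a"
      by (simp add: tensor_eval_class free_carrier_delta free_eval_one_tensor group_ring_map_lift a_carrier)
    ultimately show "a \<in> tensor_eval ` tensor_carrier G H f (aug_ideal_r G r)"
      unfolding tensor_carrier_def by (metis imageI)
  qed
qed

end

theorem lemma3p2:
  fixes G :: "('g, 'm) monoid_scheme" and H :: "('h, 'n) monoid_scheme"
    and f :: "'g \<Rightarrow> 'h" and r :: int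
  assumes "group G" and "group H"
    and "finite (carrier G)" and "finite (carrier H)"
    and "f \<in> hom G H" and "f ` carrier G = carrier H"
    and "coprime r (int (order G))"
  shows "\<exists>\<phi>. bij_betw \<phi> (tensor_carrier G H f (aug_ideal_r G r)) (aug_ideal_r H r)
            \<and> (\<forall>S1\<in>tensor_carrier G H f (aug_ideal_r G r).
                 \<forall>S2\<in>tensor_carrier G H f (aug_ideal_r G r).
                   \<phi> (tensor_add G H f (aug_ideal_r G r) S1 S2)
                     = \<phi> S1 \<oplus>\<^bsub>group_ring H\<^esub> \<phi> S2)
            \<and> (\<forall>b\<in>carrier (group_ring H). \<forall>S1\<in>tensor_carrier G H f (aug_ideal_r G r).
                   \<phi> (tensor_smult G H f (aug_ideal_r G r) b S1)
                     = b \<otimes>\<^bsub>group_ring H\<^esub> \<phi> S1)"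
proof -
  interpret group_ring_epi_aug G H f r
    using assms
    by (intro group_ring_epi_aug.intro group_ring_epi.intro group_hom.intro group_hom_axioms.intro
              finite_group.intro finite_group_axioms.intro group_ring_epi_axioms.intro
              group_ring_epi_aug_axioms.intro)
  show ?thesis
    using inj_on_tensor_eval tensor_eval_image tensor_eval_add tensor_eval_smult
    by (intro exI[of _ tensor_eval]) (simp add: bij_betw_def)
qed

end
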